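(* Let $\mathcal{A}$ be a unital algebra over a field $F$ with $\operatorname{char}(F)\neq2$ and let $f\in\operatorname{QJDer}(\mathcal{A})$. Then $f\in\operatorname{JCent}(\mathcal{A})+\operatorname{JDer}(\mathcal{A})$ if and only if $f(1)\in Z_J(\mathcal{A})$.
   Context: $x\circ y=xy+yx$, $[x,y]=xy-yx$. $\operatorname{QJDer}(\mathcal{A})$: linear $f:\mathcal{A}\to\mathcal{A}$ for which there is a linear $h$ with $f(x)\circ y+x\circ f(y)=h(x\circ y)$ for all $x,y$. $\operatorname{JCent}(\mathcal{A})$: linear $f$ with $f(x\circ y)=f(x)\circ y$ for all $x,y$. $\operatorname{JDer}(\mathcal{A})$: linear $d$ with $d(x\circ y)=d(x)\circ y+x\circ d(y)$ for all $x,y$. $Z_J(\mathcal{A})=\{a: [[a,x],y]=0\ \forall x,y\in\mathcal{A}\}$. Sums of sets of maps are sets of pointwise sums. *)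

theory Defs
  imports Main
begin

definition is_algebra :: "('k::field \<Rightarrow> 'a::ring_1 \<Rightarrow> 'a) \<Rightarrow> bool" where
  "is_algebra sm \<longleftrightarrow>
     (\<forall>c x y. sm c (x + y) = sm c x + sm c y) \<and>
     (\<forall>c d x. sm (c + d) x = sm c x + sm d x) \<and>
     (\<forall>c d x. sm (c * d) x = sm c (sm d x)) \<and>
     (\<forall>x. sm 1 x = x) \<and>
     (\<forall>c x y. sm c (x * y) = sm c x * y) \<and>
     (\<forall>c x y. sm c (x * y) = x * sm c y)"

definition is_linear :: "('k::field \<Rightarrow> 'a::ring_1 \<Rightarrow> 'a) \<Rightarrow> ('a \<Rightarrow> 'a) \<Rightarrow> bool" where
  "is_linear sm f \<longleftrightarrow> (\<forall>x y. f (x + y) = f x + f y) \<and> (\<forall>c x. f (sm c x) = sm c (f x))"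

definition jprod :: "'a::ring_1 \<Rightarrow> 'a \<Rightarrow> 'a" where
  "jprod x y = x * y + y * x"

definition lbr :: "'a::ring_1 \<Rightarrow> 'a \<Rightarrow> 'a" where
  "lbr x y = x * y - y * x"

definition QJDer :: "('k::field \<Rightarrow> 'a::ring_1 \<Rightarrow> 'a) \<Rightarrow> ('a \<Rightarrow> 'a) set" where
  "QJDer sm = {f. is_linear sm f \<and>
     (\<exists>h. is_linear sm h \<and> (\<forall>x y. jprod (f x) y + jprod x (f y) = h (jprod x y)))}"

definition JCent :: "('k::field \<Rightarrow> 'a::ring_1 \<Rightarrow> 'a) \<Rightarrow> ('a \<Rightarrow> 'a) set" where
  "JCent sm = {f. is_linear sm f \<and> (\<forall>x y. f (jprod x y) = jprod (f x) y)}"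

definition JDer :: "('k::field \<Rightarrow> 'a::ring_1 \<Rightarrow> 'a) \<Rightarrow> ('a \<Rightarrow> 'a) set" where
  "JDer sm = {d. is_linear sm d \<and> (\<forall>x y. d (jprod x y) = jprod (d x) y + jprod x (d y))}"

definition ZJ :: "'a::ring_1 set" where
  "ZJ = {a. \<forall>x y. lbr (lbr a x) y = 0}"

definition map_sum :: "('a \<Rightarrow> 'b::plus) set \<Rightarrow> ('a \<Rightarrow> 'b) set \<Rightarrow> ('a \<Rightarrow> 'b) set" where
  "map_sum S T = {(\<lambda>x. f x + g x) | f g. f \<in> S \<and> g \<in> T}"

end

theory Submission
  imports Defs
begin

text \<open>Write \<open>x \<circ> y\<close> for the Jordan product. A Jordan centroid map \<open>g\<close> satisfies
  \<open>2 g x = g 1 \<circ> x\<close>, and comparing \<open>2 g (x \<circ> y)\<close> with \<open>2 g x \<circ> y\<close> gives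
  \<open>c \<circ> (x \<circ> y) = (c \<circ> x) \<circ> y\<close> for \<open>c = g 1\<close>; the defect of this associativity is
  \<open>[[c, y], x]\<close>, so \<open>Z\<^sub>J\<close> consists exactly of the \<open>c\<close> for which it vanishes. Since Jordan
  derivations kill \<open>1\<close>, \<open>f = g + d\<close> forces \<open>f 1 = g 1 \<in> Z\<^sub>J\<close>.
  Conversely, for \<open>c = f 1 \<in> Z\<^sub>J\<close> the map \<open>g x = (c \<circ> x)/2\<close> is a Jordan centroid map;
  putting \<open>y = 1\<close> in the defining identity of \<open>f\<close> identifies the associated map as \<open>h = f + g\<close>,
  and then \<open>f - g\<close> is a Jordan derivation.\<close>

lemma jprod_commute: "jprod x y = jprod y x"
  unfolding jprod_def by (simp add: add.commute)

lemma jprod_one_left: "jprod 1 x = x + x"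
  unfolding jprod_def by simp

lemma jprod_one_right: "jprod x 1 = x + x"
  unfolding jprod_def by simp

lemma jprod_add_right: "jprod c (x + y) = jprod c x + jprod c y"
  unfolding jprod_def by (simp add: algebra_simps)

lemma jprod_assoc_defect: "jprod c (jprod x y) - jprod (jprod c x) y = lbr (lbr c y) x"
  unfolding jprod_def lbr_def by (simp add: algebra_simps)

lemma ZJ_iff_jprod_assoc: "c \<in> ZJ \<longleftrightarrow> (\<forall>x y. jprod c (jprod x y) = jprod (jprod c x) y)"
  unfolding ZJ_def by (simp flip: jprod_assoc_defect) blast

lemma linear_add: "is_linear sm f \<Longrightarrow> f (x + y) = f x + f y"
  unfolding is_linear_def by blast

lemma JCent_jprod_right:
  assumes "g \<in> JCent sm"
  shows "g (jprod x y) = jprod x (g y)"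
proof -
  have "g (jprod y x) = jprod (g y) x"
    using assms unfolding JCent_def by blast
  then show ?thesis
    by (metis jprod_commute)
qed

lemma JCent_double:
  assumes "g \<in> JCent sm"
  shows "g x + g x = jprod (g 1) x"
proof -
  have "is_linear sm g"
    using assms unfolding JCent_def by blast
  then have "g x + g x = g (jprod 1 x)"
    by (simp add: linear_add jprod_one_left)
  also have "\<dots> = jprod (g 1) x"
    using assms unfolding JCent_def by blast
  finally show ?thesis .
qed

lemma JCent_one_in_ZJ:
  assumes "g \<in> JCent sm"
  shows "g 1 \<in> ZJ"
  unfolding ZJ_iff_jprod_assoc
proof (intro allI)
  fix x y
  have cent: "g (jprod u v) = jprod (g u) v" for u v
    using assms unfolding JCent_def by blast
  have "jprod (g 1) (jprod x y) = g (jprod x y) + g (jprod x y)"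
    using JCent_double[OF assms] by simp
  also have "\<dots> = jprod (g x + g x) y"
    using cent[of x y] by (simp add: jprod_def algebra_simps)
  also have "\<dots> = jprod (jprod (g 1) x) y"
    using JCent_double[OF assms] by simp
  finally show "jprod (g 1) (jprod x y) = jprod (jprod (g 1) x) y" .
qed

definition half_jmult :: "('k::field \<Rightarrow> 'a::ring_1 \<Rightarrow> 'a) \<Rightarrow> 'a \<Rightarrow> 'a \<Rightarrow> 'a" where
  "half_jmult sm c x = sm (inverse 2) (jprod c x)"

context
  fixes sm :: "'k::field \<Rightarrow> 'a::ring_1 \<Rightarrow> 'a"
  assumes alg: "is_algebra sm"
begin

lemma sm_add: "sm c (x + y) = sm c x + sm c y"
  using alg unfolding is_algebra_def by blast

lemma sm_minus: "sm c (- x) = - sm c x"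
proof (rule minus_unique[symmetric])
  have "sm c 0 = 0"
    using sm_add[of c 0 0] by simp
  then show "sm c x + sm c (- x) = 0"
    by (simp flip: sm_add)
qed

lemma sm_diff: "sm c (x - y) = sm c x - sm c y"
  using sm_add[of c x "- y"] by (simp add: sm_minus)

lemma sm_commute: "sm c (sm d x) = sm d (sm c x)"
proof -
  have scale_mult: "sm (a * b) z = sm a (sm b z)" for a b z
    using alg unfolding is_algebra_def by blast
  have "sm c (sm d x) = sm (d * c) x"
    by (simp only: scale_mult mult.commute[of d c])
  also have "\<dots> = sm d (sm c x)"
    by (rule scale_mult)
  finally show ?thesis .
qed

lemma sm_jprod_left: "sm c (jprod x y) = jprod (sm c x) y"
proof -
  have "sm c (x * y) = sm c x * y" and "sm c (y * x) = y * sm c x"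
    using alg unfolding is_algebra_def by blast+
  then show ?thesis
    by (simp add: jprod_def sm_add)
qed

lemma sm_jprod_right: "sm c (jprod x y) = jprod x (sm c y)"
  using sm_jprod_left[of c y x] by (simp only: jprod_commute)

lemma sm_half_add_half:
  assumes "(2::'k) \<noteq> 0"
  shows "sm (inverse 2) x + sm (inverse 2) x = x"
proof -
  have scale_add: "sm (a + b) z = sm a z + sm b z" and scale_one: "sm 1 z = z" for a b z
    using alg unfolding is_algebra_def by blast+
  have "inverse 2 + inverse 2 = (1::'k)"
    using assms by (simp add: field_simps)
  then show ?thesis
    by (metis scale_add scale_one)
qed

lemma double_inject:
  fixes x y :: 'a
  assumes "(2::'k) \<noteq> 0" and "x + x = y + y"
  shows "x = y"
  by (metis assms sm_add sm_half_add_half)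

lemma linear_diff:
  assumes "is_linear sm f" and "is_linear sm g"
  shows "is_linear sm (\<lambda>x. f x - g x)"
  using assms unfolding is_linear_def by (simp add: sm_diff)

lemma JDer_one:
  assumes "(2::'k) \<noteq> 0" and "d \<in> JDer sm"
  shows "d 1 = 0"
proof -
  have lin: "is_linear sm d" and der: "d (jprod x y) = jprod (d x) y + jprod x (d y)" for x y
    using assms(2) unfolding JDer_def by blast+
  have "d 1 + d 1 = d (jprod 1 1)"
    by (simp only: jprod_one_left linear_add[OF lin])
  also have "\<dots> = (d 1 + d 1) + (d 1 + d 1)"
    using der[of 1 1] by (simp add: jprod_def)
  finally have "d 1 + d 1 = 0 + 0"
    by simp
  then show ?thesis
    using assms(1) double_inject by blast
qed

lemma half_jmult_in_JCent:
  assumes "c \<in> ZJ"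
  shows "half_jmult sm c \<in> JCent sm"
proof -
  have "half_jmult sm c (sm a x) = sm a (half_jmult sm c x)" for a x
    unfolding half_jmult_def by (simp only: sm_commute flip: sm_jprod_right)
  then have "is_linear sm (half_jmult sm c)"
    unfolding is_linear_def by (simp add: half_jmult_def jprod_add_right sm_add)
  moreover have "half_jmult sm c (jprod x y) = jprod (half_jmult sm c x) y" for x y
    using assms unfolding ZJ_iff_jprod_assoc half_jmult_def by (simp add: sm_jprod_left)
  ultimately show ?thesis
    unfolding JCent_def by blast
qed

lemma QJDer_minus_JCent_in_JDer:
  assumes "is_linear sm f" and "g \<in> JCent sm"
    and "\<And>x y. jprod (f x) y + jprod x (f y) = f (jprod x y) + g (jprod x y)"
  shows "(\<lambda>x. f x - g x) \<in> JDer sm"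
proof -
  have "is_linear sm (\<lambda>x. f x - g x)"
    using assms(1,2) linear_diff unfolding JCent_def by blast
  moreover have "f (jprod x y) - g (jprod x y) = jprod (f x - g x) y + jprod x (f y - g y)" for x y
  proof -
    have "g (jprod x y) = jprod (g x) y"
      using assms(2) unfolding JCent_def by blast
    moreover have "g (jprod x y) = jprod x (g y)"
      using assms(2) by (rule JCent_jprod_right)
    ultimately show ?thesis
      using assms(3)[of x y] unfolding jprod_def by (simp add: algebra_simps)
  qed
  ultimately show ?thesis
    unfolding JDer_def by blast
qed

lemma QJDer_associated_map:
  assumes "(2::'k) \<noteq> 0" and "is_linear sm h"
    and "\<And>x y. jprod (f x) y + jprod x (f y) = h (jprod x y)"
  shows "h x = f x + half_jmult sm (f 1) x"
proof (rule double_inject[OF assms(1)])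
  have "h x + h x = jprod (f x) 1 + jprod x (f 1)"
    using assms(3)[of x 1] linear_add[OF assms(2), of x x] by (simp only: jprod_one_right)
  also have "\<dots> = (f x + f x) + (half_jmult sm (f 1) x + half_jmult sm (f 1) x)"
    by (simp only: jprod_one_right jprod_commute[of x] half_jmult_def sm_half_add_half[OF assms(1)])
  also have "\<dots> = (f x + half_jmult sm (f 1) x) + (f x + half_jmult sm (f 1) x)"
    by (simp only: ac_simps)
  finally show "h x + h x = (f x + half_jmult sm (f 1) x) + (f x + half_jmult sm (f 1) x)" .
qed

end

theorem lemma4p1:
  fixes sm :: "'k::field \<Rightarrow> 'a::ring_1 \<Rightarrow> 'a" and f :: "'a \<Rightarrow> 'a"
  assumes "is_algebra sm"
    and "(2::'k) \<noteq> 0"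
    and "f \<in> QJDer sm"
  shows "f \<in> map_sum (JCent sm) (JDer sm) \<longleftrightarrow> f 1 \<in> ZJ"
proof
  assume "f \<in> map_sum (JCent sm) (JDer sm)"
  then obtain g d where "f = (\<lambda>x. g x + d x)" "g \<in> JCent sm" "d \<in> JDer sm"
    unfolding map_sum_def by blast
  then show "f 1 \<in> ZJ"
    using JCent_one_in_ZJ[of g] JDer_one[OF assms(1,2), of d] by simp
next
  assume "f 1 \<in> ZJ"
  let ?g = "half_jmult sm (f 1)"
  obtain h where "is_linear sm f" "is_linear sm h"
    and quasi: "\<And>x y. jprod (f x) y + jprod x (f y) = h (jprod x y)"
    using assms(3) unfolding QJDer_def by blast
  have "?g \<in> JCent sm"
    using half_jmult_in_JCent[OF assms(1) \<open>f 1 \<in> ZJ\<close>] .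
  moreover have "(\<lambda>x. f x - ?g x) \<in> JDer sm"
    using QJDer_minus_JCent_in_JDer[OF assms(1) \<open>is_linear sm f\<close> \<open>?g \<in> JCent sm\<close>]
      QJDer_associated_map[OF assms(1,2) \<open>is_linear sm h\<close> quasi] quasi by simp
  ultimately show "f \<in> map_sum (JCent sm) (JDer sm)"
    unfolding map_sum_def by force
qed

end
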